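(* Let $X$ be a finite set with $|X|\ge 3$, let $T=(V,E)\in B(X)$, let $\mathcal T$ and $\mathcal T'$ be triplet covers of $T$, and let $x\in X$. Then: (P1) for every $v\in\mathring V$, $0\le\deg_{\mathcal T}(v)\le 3$, and $1\le\deg_{\mathcal T}(x)\le|X|-2$; (P2) if $\mathcal T'\subseteq\mathcal T$ then $E(\mathcal T)\subseteq E(\mathcal T')$; in particular, if $\deg_{\mathcal T'}(x)=1$ then $\deg_{\mathcal T}(x)=1$; (P3) if $\mathcal T$ is a minimal triplet cover for $T$, then for every $ab\in\mathcal T$ there is some $v\in\mathring V$ such that $a,v,b$ is a path in $G(\mathcal T)$; (P4) if $v$ is the vertex adjacent to $x$ in $T$, then $\{v,x\}\in E(\mathcal T)$; furthermore $\deg_{\mathcal T}(x)=1$ if and only if $\{v,x\}$ is the only edge of $G(\mathcal T)$ containing $x$; (P5) if $|X|\ge 4$, then $\deg_{\mathcal T}(x)=1$ if and only if $\mathcal T^{-x}$ is a triplet cover of $T-x$; (P6) if $\deg_{\mathcal T}(x)=1$ then $|\mathcal T|\ge|\mathcal T^{-x}|+2$.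
   Context: A binary phylogenetic $X$-tree is an unrooted tree $T=(V,E)$ whose leaf set is $X$ and all of whose non-leaf vertices are unlabelled of degree three; $B(X)$ is the set of such trees; $\mathring V$ is the set of interior vertices. Pairs in $\binom{X}{2}$ are written $ab$, triples $abc$. Given $\mathcal T\subseteq\binom{X}{2}$, a triple $abc$ supports $v\in\mathring V$ if $a,b,c$ lie one in each of the three connected components of $T$ with $v$ and its incident edges removed and $ab,ac,bc\in\mathcal T$; $S_v(\mathcal T)$ is the set of triples supporting $v$. $\mathcal T$ is a triplet cover for $T$ if $S_v(\mathcal T)\ne\emptyset$ for all $v\in\mathring V$; it is minimal if $\mathcal T-\{ab\}$ is not a triplet cover for $T$ for any $ab\in\mathcal T$. The support graph $G(\mathcal T)$ is the bipartite graph with vertex set $X\amalg\mathring V$ and edge set $E(\mathcal T)$, where $\{x,v\}\in E(\mathcal T)$ ($x\in X$, $v\in\mathring V$) iff $x\in A$ for all $A\in S_v(\mathcal T)$; $\deg_{\mathcal T}(p)$ denotes the degree of a vertex $p$ in $G(\mathcal T)$. For $x\in X$, $\mathcal T^{-x}$ is obtained from $\mathcal T$ by removing all pairs containing $x$. For $|X|\ge 4$, $T-x$ is the tree in $B(X-\{x\})$ obtained from $T$ by deleting leaf $x$ and its incident edge and suppressing the resulting degree-2 vertex. *)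

theory Defs
  imports Main
begin

text \<open>Leaves of a phylogenetic
X-tree are identified with the taxa in X (so X is a subset of V).\<close>

definition pairs :: "'v set \<Rightarrow> 'v set set" where
  "pairs X = {p. \<exists>a b. p = {a, b} \<and> a \<noteq> b \<and> a \<in> X \<and> b \<in> X}"

definition adj :: "'v set set \<Rightarrow> ('v \<times> 'v) set" where
  "adj E = {(a, b). {a, b} \<in> E}"

definition vdeg :: "'v set set \<Rightarrow> 'v \<Rightarrow> nat" where
  "vdeg E v = card {e \<in> E. v \<in> e}"

definition is_tree :: "'v set \<Rightarrow> 'v set set \<Rightarrow> bool" where
  "is_tree V E \<longleftrightarrow> finite V \<and> V \<noteq> {} \<and>
     E \<subseteq> pairs V \<and>
     (\<forall>a\<in>V. \<forall>b\<in>V. (a, b) \<in> (adj E)\<^sup>*) \<and>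
     (\<forall>e\<in>E. \<exists>a b. e = {a, b} \<and> (a, b) \<notin> (adj (E - {e}))\<^sup>*)"

definition binary_phylo_tree :: "'v set \<Rightarrow> 'v set \<Rightarrow> 'v set set \<Rightarrow> bool" where
  "binary_phylo_tree X V E \<longleftrightarrow> is_tree V E \<and> X \<subseteq> V \<and>
     (\<forall>v\<in>V. v \<in> X \<longleftrightarrow> vdeg E v = 1) \<and>
     (\<forall>v\<in>V - X. vdeg E v = 3)"

definition interior :: "'v set \<Rightarrow> 'v set \<Rightarrow> 'v set" where
  "interior X V = V - X"

definition separated :: "'v set \<Rightarrow> 'v set set \<Rightarrow> 'v \<Rightarrow> 'v \<Rightarrow> 'v \<Rightarrow> bool" where
  "separated V E v a b \<longleftrightarrow> a \<in> V - {v} \<and> b \<in> V - {v} \<and>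
     (a, b) \<notin> (adj {e \<in> E. v \<notin> e})\<^sup>*"

text \<open>S_v(T): triples supporting v (since T - v has exactly three components,
pairwise separation of a,b,c means one in each component).\<close>
definition supp :: "'v set \<Rightarrow> 'v set set \<Rightarrow> 'v set set \<Rightarrow> 'v \<Rightarrow> 'v set set" where
  "supp V E \<T> v = {{a, b, c} | a b c.
     separated V E v a b \<and> separated V E v a c \<and> separated V E v b c \<and>
     {a, b} \<in> \<T> \<and> {a, c} \<in> \<T> \<and> {b, c} \<in> \<T>}"

definition triplet_cover :: "'v set \<Rightarrow> 'v set \<Rightarrow> 'v set set \<Rightarrow> 'v set set \<Rightarrow> bool" where
  "triplet_cover X V E \<T> \<longleftrightarrow> \<T> \<subseteq> pairs X \<and>
     (\<forall>v\<in>interior X V. supp V E \<T> v \<noteq> {})"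

definition minimal_triplet_cover :: "'v set \<Rightarrow> 'v set \<Rightarrow> 'v set set \<Rightarrow> 'v set set \<Rightarrow> bool" where
  "minimal_triplet_cover X V E \<T> \<longleftrightarrow> triplet_cover X V E \<T> \<and>
     (\<forall>p\<in>\<T>. \<not> triplet_cover X V E (\<T> - {p}))"

text \<open>Edge set E(T) of the support graph G(T) (vertex set X disjoint-union interior);
edges are represented as two-element sets {x, v}.\<close>
definition support_edges :: "'v set \<Rightarrow> 'v set \<Rightarrow> 'v set set \<Rightarrow> 'v set set \<Rightarrow> 'v set set" where
  "support_edges X V E \<T> = {{x, v} | x v. x \<in> X \<and> v \<in> interior X V \<and>
     (\<forall>A\<in>supp V E \<T> v. x \<in> A)}"

definition sdeg :: "'v set \<Rightarrow> 'v set \<Rightarrow> 'v set set \<Rightarrow> 'v set set \<Rightarrow> 'v \<Rightarrow> nat" where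
  "sdeg X V E \<T> p = card {e \<in> support_edges X V E \<T>. p \<in> e}"

definition remove_taxon :: "'v set set \<Rightarrow> 'v \<Rightarrow> 'v set set" where
  "remove_taxon \<T> x = {p \<in> \<T>. x \<notin> p}"

text \<open>T - x: delete leaf x and its edge, suppress its (former) neighbour u.\<close>
definition leaf_nbr :: "'v set set \<Rightarrow> 'v \<Rightarrow> 'v" where
  "leaf_nbr E x = (THE u. {x, u} \<in> E)"

definition del_leaf_V :: "'v set \<Rightarrow> 'v set set \<Rightarrow> 'v \<Rightarrow> 'v set" where
  "del_leaf_V V E x = V - {x, leaf_nbr E x}"

definition del_leaf_E :: "'v set set \<Rightarrow> 'v \<Rightarrow> 'v set set" where
  "del_leaf_E E x = {e \<in> E. leaf_nbr E x \<notin> e} \<union>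
     {{a, b} | a b. {a, leaf_nbr E x} \<in> E \<and> {b, leaf_nbr E x} \<in> E \<and>
        a \<noteq> x \<and> b \<noteq> x \<and> a \<noteq> b}"

end

theory Submission
  imports Defs
begin

text \<open>
  A leaf x hangs off an interior vertex u, and one of the three branches at u consists of x
  alone; hence every triple supporting u contains x, so {u, x} is an edge of the support graph
  of every triplet cover. This gives the lower bound in (P1), the characterisation of degree
  one in (P4), its monotonicity in (P2), and, from a triple supporting u, the two pairs through
  x needed in (P6). The upper bounds in (P1) come from supporting triples having three
  elements and from a binary tree having at most |X| - 2 interior vertices (handshake lemma
  together with |E| < |V| for trees). For (P5): deleting x and suppressing u does not change
  which remaining taxa are separated at any other interior vertex w, so the triples of the
  reduced cover supporting w in T - x are exactly the triples supporting w in T that avoid x.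
  For (P3): removing ab from a minimal cover leaves some vertex unsupported, so every triple
  supporting that vertex contains a and b.
\<close>

section \<open>Counting edges of trees\<close>

lemma pairs_subset: "e \<in> pairs V \<Longrightarrow> e \<subseteq> V"
  unfolding pairs_def by auto

lemma pairsE:
  assumes "e \<in> pairs V"
  obtains a b where "e = {a, b}" "a \<noteq> b" "a \<in> V" "b \<in> V"
  using assms unfolding pairs_def by auto

lemma finite_pairs_subset:
  assumes "finite V" "E \<subseteq> pairs V"
  shows "finite E"
proof (rule finite_subset)
  show "E \<subseteq> Pow V" using assms(2) pairs_subset by blast
qed (use assms(1) in simp)

lemma adj_iff [simp]: "(a, b) \<in> adj F \<longleftrightarrow> {a, b} \<in> F"
  unfolding adj_def by simp

lemma sym_adj: "sym (adj F)"
  unfolding sym_def by (simp add: insert_commute)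

lemma rtrancl_adj_sym: "(a, b) \<in> (adj F)\<^sup>* \<Longrightarrow> (b, a) \<in> (adj F)\<^sup>*"
  using sym_rtrancl[OF sym_adj] by (rule symD)

lemma rtrancl_adj_mono:
  assumes "F \<subseteq> G" "(a, b) \<in> (adj F)\<^sup>*"
  shows "(a, b) \<in> (adj G)\<^sup>*"
proof -
  have "adj F \<subseteq> adj G" using assms(1) unfolding adj_def by auto
  then show ?thesis using assms(2) rtrancl_mono by blast
qed

definition component :: "'v set \<Rightarrow> 'v set set \<Rightarrow> 'v \<Rightarrow> 'v set" where
  "component V F u = {w \<in> V. (u, w) \<in> (adj F)\<^sup>*}"

lemma component_eq:
  assumes "(u, v) \<in> (adj F)\<^sup>*"
  shows "component V F u = component V F v"
  using rtrancl_trans[OF assms] rtrancl_trans[OF rtrancl_adj_sym[OF assms]]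
  unfolding component_def by blast

lemma card_components_insert_bridge:
  assumes "finite V" "a \<in> V" "b \<in> V" "(a, b) \<notin> (adj F)\<^sup>*"
  shows "card (component V (insert {a, b} F) ` V) < card (component V F ` V)"
proof -
  define F' where "F' = insert {a, b} F"
  define merge where "merge C = \<Union> (component V F' ` C)" for C
  have merge_component: "merge (component V F u) = component V F' u" if "u \<in> V" for u
  proof -
    have "component V F' w = component V F' u" if "w \<in> component V F u" for w
    proof -
      have "(u, w) \<in> (adj F)\<^sup>*" using that unfolding component_def by simp
      then have "(u, w) \<in> (adj F')\<^sup>*" unfolding F'_def by (rule rtrancl_adj_mono[rotated]) blast
      then show ?thesis by (rule component_eq[symmetric])
    qed
    moreover have "u \<in> component V F u" using that unfolding component_def by simp
    ultimately have "component V F' ` component V F u = {component V F' u}" by blast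
    then show ?thesis unfolding merge_def by simp
  qed
  have image: "component V F' ` V = merge ` (component V F ` V)"
    using merge_component by (simp add: image_image)
  have "component V F a \<noteq> component V F b"
    using assms unfolding component_def by auto
  moreover have "merge (component V F a) = merge (component V F b)"
  proof -
    have "(a, b) \<in> (adj F')\<^sup>*" unfolding F'_def by auto
    then have "component V F' a = component V F' b" by (rule component_eq)
    then show ?thesis using merge_component assms(2,3) by simp
  qed
  ultimately have "\<not> inj_on merge (component V F ` V)"
    using assms(2,3) by (auto dest: inj_onD)
  then have "card (merge ` (component V F ` V)) \<noteq> card (component V F ` V)"
    using assms(1) inj_on_iff_eq_card by blast
  moreover have "card (merge ` (component V F ` V)) \<le> card (component V F ` V)"
    using assms(1) by (simp add: card_image_le)
  ultimately show ?thesis unfolding F'_def[symmetric] image by linarith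
qed

text \<open>Each bridge, inserted one at a time, merges two components.\<close>
lemma forest_card_edges:
  assumes "finite V" "finite F"
    and "\<forall>e\<in>F. \<exists>a b. e = {a, b} \<and> a \<in> V \<and> b \<in> V \<and> (a, b) \<notin> (adj (F - {e}))\<^sup>*"
  shows "card F + card (component V F ` V) \<le> card V"
  using assms(2,3)
proof (induction F rule: finite_induct)
  case empty
  show ?case using card_image_le[OF assms(1)] by simp
next
  case (insert e F)
  obtain a b where e: "e = {a, b}" "a \<in> V" "b \<in> V"
    and "(a, b) \<notin> (adj (insert e F - {e}))\<^sup>*"
    using insert.prems by blast
  moreover have "insert e F - {e} = F" using insert.hyps(2) by blast
  ultimately have bridge: "(a, b) \<notin> (adj F)\<^sup>*" by simp
  have "\<forall>f\<in>F. \<exists>a b. f = {a, b} \<and> a \<in> V \<and> b \<in> V \<and> (a, b) \<notin> (adj (F - {f}))\<^sup>*"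
  proof
    fix f assume "f \<in> F"
    then obtain p q where pq: "f = {p, q}" "p \<in> V" "q \<in> V"
      and bridge: "(p, q) \<notin> (adj (insert e F - {f}))\<^sup>*"
      using insert.prems by blast
    have "(p, q) \<notin> (adj (F - {f}))\<^sup>*"
      using bridge rtrancl_adj_mono[of "F - {f}" "insert e F - {f}" p q] by blast
    then show "\<exists>a b. f = {a, b} \<and> a \<in> V \<and> b \<in> V \<and> (a, b) \<notin> (adj (F - {f}))\<^sup>*"
      using pq by blast
  qed
  then have "card F + card (component V F ` V) \<le> card V" by (rule insert.IH)
  moreover have "card (component V (insert e F) ` V) < card (component V F ` V)"
    using card_components_insert_bridge[OF assms(1) e(2,3) bridge] e(1) by simp
  moreover have "card (insert e F) = Suc (card F)" using insert.hyps by simp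
  ultimately show ?case by linarith
qed

lemma is_tree_card_edges:
  assumes "is_tree V E"
  shows "card E + 1 \<le> card V"
proof -
  have V: "finite V" "V \<noteq> {}" and EV: "E \<subseteq> pairs V"
    and conn: "\<forall>a\<in>V. \<forall>b\<in>V. (a, b) \<in> (adj E)\<^sup>*"
    and bridges: "\<forall>e\<in>E. \<exists>a b. e = {a, b} \<and> (a, b) \<notin> (adj (E - {e}))\<^sup>*"
    using assms unfolding is_tree_def by auto
  have "\<forall>e\<in>E. \<exists>a b. e = {a, b} \<and> a \<in> V \<and> b \<in> V \<and> (a, b) \<notin> (adj (E - {e}))\<^sup>*"
  proof
    fix e assume "e \<in> E"
    then obtain a b where "e = {a, b}" "(a, b) \<notin> (adj (E - {e}))\<^sup>*"
      using bridges by blast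
    moreover have "e \<subseteq> V" using \<open>e \<in> E\<close> EV pairs_subset by blast
    ultimately show "\<exists>a b. e = {a, b} \<and> a \<in> V \<and> b \<in> V \<and> (a, b) \<notin> (adj (E - {e}))\<^sup>*"
      by blast
  qed
  moreover have "component V E ` V = {V}"
  proof -
    have "component V E u = V" if "u \<in> V" for u
      using conn that unfolding component_def by blast
    then show ?thesis using V(2) by blast
  qed
  ultimately show ?thesis
    using forest_card_edges[OF V(1) finite_pairs_subset[OF V(1) EV]] by simp
qed

lemma sum_vdeg:
  assumes "finite V" "E \<subseteq> pairs V"
  shows "(\<Sum>v\<in>V. vdeg E v) = 2 * card E"
proof -
  have finE: "finite E" using assms by (rule finite_pairs_subset)
  have "(\<Sum>v\<in>V. vdeg E v) = (\<Sum>v\<in>V. \<Sum>e\<in>E. if v \<in> e then 1 else 0)"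
    unfolding vdeg_def using finE by (simp add: sum.inter_filter[symmetric])
  also have "\<dots> = (\<Sum>e\<in>E. card {v\<in>V. v \<in> e})"
    using assms(1) by (subst sum.swap) (simp add: sum.inter_filter[symmetric])
  also have "\<dots> = (\<Sum>e\<in>E. 2)"
  proof (rule sum.cong)
    fix e assume "e \<in> E"
    then obtain a b where "e = {a, b}" "a \<noteq> b" "a \<in> V" "b \<in> V"
      using assms(2) pairsE by blast
    then have "{v\<in>V. v \<in> e} = {a, b}" by auto
    then show "card {v\<in>V. v \<in> e} = 2" using \<open>a \<noteq> b\<close> by simp
  qed simp
  finally show ?thesis by simp
qed

lemma binary_phylo_tree_card_interior:
  assumes "binary_phylo_tree X V E"
  shows "card (interior X V) + 2 \<le> card X"
proof -
  have tree: "is_tree V E" and XV: "X \<subseteq> V"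
    and leaves: "\<forall>v\<in>X. vdeg E v = 1" and inner: "\<forall>v\<in>V - X. vdeg E v = 3"
    using assms unfolding binary_phylo_tree_def by auto
  have V: "finite V" and EV: "E \<subseteq> pairs V" using tree unfolding is_tree_def by blast+
  have "2 * card E = (\<Sum>v\<in>V - X. vdeg E v) + (\<Sum>v\<in>X. vdeg E v)"
    using sum_vdeg[OF V EV] sum.subset_diff[OF XV V, of "vdeg E"] by simp
  also have "\<dots> = 3 * card (V - X) + card X"
    using leaves inner by simp
  finally have "2 * card E = 3 * card (V - X) + card X" .
  moreover have "card V = card (V - X) + card X"
    using card_Diff_subset[OF finite_subset[OF XV V] XV] card_mono[OF V XV] by simp
  ultimately show ?thesis using is_tree_card_edges[OF tree] unfolding interior_def by simp
qed

section \<open>Pendant vertices and supporting triples\<close>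

lemma card_neighbours_eq_vdeg:
  assumes "E \<subseteq> pairs V"
  shows "card {y. {v, y} \<in> E} = vdeg E v"
proof -
  have "{e\<in>E. v \<in> e} = (\<lambda>y. {v, y}) ` {y. {v, y} \<in> E}"
  proof (intro equalityI subsetI)
    fix e assume e: "e \<in> {e\<in>E. v \<in> e}"
    then obtain a b where ab: "e = {a, b}" using assms pairsE by blast
    define y where "y = (if a = v then b else a)"
    have "e = {v, y}" using ab e unfolding y_def by auto
    then show "e \<in> (\<lambda>y. {v, y}) ` {y. {v, y} \<in> E}" using e by blast
  qed auto
  moreover have "inj_on (\<lambda>y. {v, y}) {y. {v, y} \<in> E}"
    by (auto simp: inj_on_def doubleton_eq_iff)
  ultimately show ?thesis unfolding vdeg_def by (simp add: card_image)
qed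

lemma vdeg_eq_1_obtains_neighbour:
  assumes "E \<subseteq> pairs V" "vdeg E v = 1"
  obtains y where "{y. {v, y} \<in> E} = {y}"
  using card_neighbours_eq_vdeg[OF assms(1)] assms(2) card_1_singletonE by metis

lemma leaf_nbr_eq: "{y. {x, y} \<in> E} = {u} \<Longrightarrow> leaf_nbr E x = u"
  unfolding leaf_nbr_def by auto

lemma pendant_nbr_unique: "{y. {x, y} \<in> E} = {u} \<Longrightarrow> {x, z} \<in> E \<Longrightarrow> z = u"
  by (metis mem_Collect_eq singletonD)

lemma rtrancl_adj_avoiding_vertex:
  assumes "(u, p) \<in> (adj E)\<^sup>*" "p \<noteq> u"
  shows "\<exists>y. {u, y} \<in> E \<and> (y, p) \<in> (adj {e\<in>E. u \<notin> e})\<^sup>*"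
proof -
  have "p = u \<or> (\<exists>y. {u, y} \<in> E \<and> (y, p) \<in> (adj {e\<in>E. u \<notin> e})\<^sup>*)"
    using assms(1)
  proof (induction rule: rtrancl_induct)
    case (step q r)
    show ?case
    proof (cases "q = u \<or> r = u")
      case True
      then show ?thesis using step.hyps(2) by auto
    next
      case False
      then have "(q, r) \<in> adj {e\<in>E. u \<notin> e}" using step.hyps(2) by auto
      then show ?thesis using step.IH False by (blast intro: rtrancl_into_rtrancl)
    qed
  qed simp
  then show ?thesis using assms(2) by blast
qed

lemma rtrancl_adj_from_pendant:
  assumes "{y. {x, y} \<in> E} = {u}" "(x, p) \<in> (adj {e\<in>E. u \<notin> e})\<^sup>*"
  shows "p = x"
  using assms(2)
proof (cases rule: converse_rtranclE)
  case (step z)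
  then have "{x, z} \<in> E" "z \<noteq> u" by auto
  then show ?thesis using assms(1) by blast
qed simp

lemma pendant_edge_component:
  assumes "{y. {x, y} \<in> E} = {u}" "{y. {u, y} \<in> E} = {x}" "(x, p) \<in> (adj E)\<^sup>*"
  shows "p \<in> {x, u}"
  using assms(3)
proof (induction rule: rtrancl_induct)
  case (step q r)
  then show ?case using assms(1,2) by auto
qed simp

lemma separated_sym: "separated V E v a b \<Longrightarrow> separated V E v b a"
  using rtrancl_adj_sym[of b a "{e \<in> E. v \<notin> e}"] unfolding separated_def by blast

lemma supp_memberE:
  assumes "A \<in> supp V E \<T> v"
  obtains a b c where "A = {a, b, c}"
    "separated V E v a b" "separated V E v a c" "separated V E v b c"
    "{a, b} \<in> \<T>" "{a, c} \<in> \<T>" "{b, c} \<in> \<T>"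
  using assms unfolding supp_def by blast

lemma supp_member_subset: "A \<in> supp V E \<T> v \<Longrightarrow> A \<subseteq> V - {v}"
  by (erule supp_memberE) (auto simp: separated_def)

lemma card_supp_member:
  assumes "A \<in> supp V E \<T> v"
  shows "card A = 3"
proof -
  obtain a b c where "A = {a, b, c}"
    and "separated V E v a b" "separated V E v a c" "separated V E v b c"
    using assms by (rule supp_memberE)
  moreover have "a \<noteq> b" "a \<noteq> c" "b \<noteq> c"
    using calculation(2-4) unfolding separated_def by auto
  ultimately show ?thesis by simp
qed

lemma supp_member_separated:
  assumes "A \<in> supp V E \<T> v" "p \<in> A" "q \<in> A" "p \<noteq> q"
  shows "separated V E v p q"
proof -
  obtain a b c where A: "A = {a, b, c}"
    and sep: "separated V E v a b" "separated V E v a c" "separated V E v b c"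
    using assms(1) by (rule supp_memberE)
  moreover note separated_sym[OF sep(1)] separated_sym[OF sep(2)] separated_sym[OF sep(3)]
  ultimately show ?thesis using assms(2-4) by auto
qed

lemma supp_member_pair:
  assumes "A \<in> supp V E \<T> v" "p \<in> A" "q \<in> A" "p \<noteq> q"
  shows "{p, q} \<in> \<T>"
proof -
  obtain a b c where "A = {a, b, c}" "{a, b} \<in> \<T>" "{a, c} \<in> \<T>" "{b, c} \<in> \<T>"
    using assms(1) by (rule supp_memberE)
  then show ?thesis using assms(2-4) by (auto simp: insert_commute)
qed

lemma branch_root_other_than_pendant:
  assumes "(u, p) \<in> (adj E)\<^sup>*" "p \<notin> {u, x}" "{y. {x, y} \<in> E} = {u}"
  obtains y where "{u, y} \<in> E" "y \<noteq> x" "(y, p) \<in> (adj {e\<in>E. u \<notin> e})\<^sup>*"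
proof -
  have "p \<noteq> u" using assms(2) by simp
  then obtain y where y: "{u, y} \<in> E" "(y, p) \<in> (adj {e\<in>E. u \<notin> e})\<^sup>*"
    using rtrancl_adj_avoiding_vertex[OF assms(1)] by blast
  moreover have "y \<noteq> x"
  proof
    assume "y = x"
    then have "p = x" using rtrancl_adj_from_pendant[OF assms(3)] y(2) by simp
    then show False using assms(2) by simp
  qed
  ultimately show thesis using that by blast
qed

text \<open>The three elements of a triple supporting u lie in the three branches at u,
and one of these branches consists of the pendant vertex x alone.\<close>
lemma pendant_mem_supp:
  assumes EV: "E \<subseteq> pairs V" and conn: "\<forall>a\<in>V. \<forall>b\<in>V. (a, b) \<in> (adj E)\<^sup>*"
    and pendant: "{y. {x, y} \<in> E} = {u}" and deg: "vdeg E u = 3" and "u \<in> V"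
    and A: "A \<in> supp V E \<T> u"
  shows "x \<in> A"
proof (rule ccontr)
  assume "x \<notin> A"
  define R where "R = adj {e\<in>E. u \<notin> e}"
  define N where "N = {y. {u, y} \<in> E}"
  have "card N = 3" unfolding N_def using card_neighbours_eq_vdeg[OF EV] deg by simp
  moreover have "x \<in> N" using pendant unfolding N_def by (auto simp: insert_commute)
  ultimately have N_x: "card (N - {x}) = 2" "finite (N - {x})"
    by (simp_all add: card_ge_0_finite)
  have "\<forall>p\<in>A. \<exists>y. y \<in> N - {x} \<and> (y, p) \<in> R\<^sup>*"
  proof
    fix p assume "p \<in> A"
    then have "p \<in> V" "p \<notin> {u, x}" using supp_member_subset[OF A] \<open>x \<notin> A\<close> by auto
    then have "(u, p) \<in> (adj E)\<^sup>*" using conn \<open>u \<in> V\<close> by blast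
    then obtain y where "{u, y} \<in> E" "y \<noteq> x" "(y, p) \<in> R\<^sup>*"
      unfolding R_def using \<open>p \<notin> {u, x}\<close> pendant by (rule branch_root_other_than_pendant)
    then show "\<exists>y. y \<in> N - {x} \<and> (y, p) \<in> R\<^sup>*" unfolding N_def by blast
  qed
  then obtain g where g: "\<forall>p\<in>A. g p \<in> N - {x} \<and> (g p, p) \<in> R\<^sup>*"
    by (rule bchoice[elim_format]) blast
  have "inj_on g A"
  proof (rule inj_onI, rule ccontr)
    fix p q assume pq: "p \<in> A" "q \<in> A" "g p = g q" "p \<noteq> q"
    have "(g p, p) \<in> R\<^sup>*" using g pq(1) by blast
    then have "(p, g q) \<in> R\<^sup>*" unfolding pq(3) R_def by (rule rtrancl_adj_sym)
    moreover have "(g q, q) \<in> R\<^sup>*" using g pq(2) by blast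
    ultimately have "(p, q) \<in> R\<^sup>*" by (rule rtrancl_trans)
    then show False
      using supp_member_separated[OF A pq(1,2,4)] unfolding separated_def R_def by blast
  qed
  then have "card (g ` A) = 3" using card_supp_member[OF A] by (simp add: card_image)
  moreover have "card (g ` A) \<le> card (N - {x})"
    using g N_x(2) by (intro card_mono) auto
  ultimately show False using N_x(1) by simp
qed

lemma binary_phylo_tree_leaf_nbr:
  assumes "binary_phylo_tree X V E" "card X \<ge> 3" "x \<in> X"
  obtains u where "{y. {x, y} \<in> E} = {u}" "u \<in> interior X V"
proof -
  have "is_tree V E" and XV: "X \<subseteq> V" and leaf: "\<forall>v\<in>V. v \<in> X \<longleftrightarrow> vdeg E v = 1"
    using assms(1) unfolding binary_phylo_tree_def by blast+
  then have EV: "E \<subseteq> pairs V" and conn: "\<forall>a\<in>V. \<forall>b\<in>V. (a, b) \<in> (adj E)\<^sup>*"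
    unfolding is_tree_def by blast+
  have "vdeg E x = 1" using leaf XV assms(3) by blast
  then obtain u where u: "{y. {x, y} \<in> E} = {u}"
    using vdeg_eq_1_obtains_neighbour[OF EV] by blast
  then have "{x, u} \<in> E" by blast
  then have "u \<in> V" using EV pairs_subset by blast
  moreover have "u \<notin> X"
  proof
    assume "u \<in> X"
    then have "vdeg E u = 1" using leaf \<open>u \<in> V\<close> by blast
    then obtain w where w: "{y. {u, y} \<in> E} = {w}"
      using vdeg_eq_1_obtains_neighbour[OF EV] by blast
    moreover have "x \<in> {y. {u, y} \<in> E}" using \<open>{x, u} \<in> E\<close> by (simp add: insert_commute)
    ultimately have "{y. {u, y} \<in> E} = {x}" by simp
    then have "X \<subseteq> {x, u}"
      using pendant_edge_component[OF u] conn XV assms(3) by blast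
    then have "card X \<le> card {x, u}" by (rule card_mono[rotated]) simp
    also have "\<dots> \<le> 2" by (simp add: card_insert_if)
    finally show False using assms(2) by simp
  qed
  ultimately show thesis using that u unfolding interior_def by blast
qed

lemma leaf_mem_supp_nbr:
  assumes "binary_phylo_tree X V E" "{y. {x, y} \<in> E} = {u}" "u \<in> interior X V"
    and "A \<in> supp V E \<T> u"
  shows "x \<in> A"
proof (rule pendant_mem_supp[OF _ _ assms(2) _ _ assms(4)])
  show "E \<subseteq> pairs V" "\<forall>a\<in>V. \<forall>b\<in>V. (a, b) \<in> (adj E)\<^sup>*"
    using assms(1) unfolding binary_phylo_tree_def is_tree_def by blast+
  show "vdeg E u = 3" "u \<in> V"
    using assms(1,3) unfolding binary_phylo_tree_def interior_def by blast+
qed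

section \<open>The support graph\<close>

lemma support_edges_taxon:
  assumes "x \<in> X"
  shows "{e \<in> support_edges X V E \<T>. x \<in> e} =
    (\<lambda>w. {x, w}) ` {w \<in> interior X V. \<forall>A\<in>supp V E \<T> w. x \<in> A}"
  using assms unfolding support_edges_def interior_def by auto

lemma sdeg_interior_le_3:
  assumes "triplet_cover X V E \<T>" "v \<in> interior X V"
  shows "sdeg X V E \<T> v \<le> 3"
proof -
  obtain A where A: "A \<in> supp V E \<T> v"
    using assms unfolding triplet_cover_def by blast
  have "{e \<in> support_edges X V E \<T>. v \<in> e} \<subseteq> (\<lambda>y. {y, v}) ` A"
  proof
    fix e assume "e \<in> {e \<in> support_edges X V E \<T>. v \<in> e}"
    then obtain y w where e: "e = {y, w}" "y \<in> X" "w \<in> interior X V"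
      "\<forall>A\<in>supp V E \<T> w. y \<in> A" "v \<in> e"
      unfolding support_edges_def by blast
    have "v \<noteq> y" using assms(2) e(2) unfolding interior_def by blast
    then have "w = v" using e(1,5) by blast
    then show "e \<in> (\<lambda>y. {y, v}) ` A" using e A by blast
  qed
  moreover have "finite A" using card_supp_member[OF A] by (intro card_ge_0_finite) simp
  ultimately have "sdeg X V E \<T> v \<le> card ((\<lambda>y. {y, v}) ` A)"
    unfolding sdeg_def by (intro card_mono) simp_all
  also have "\<dots> \<le> card A" using \<open>finite A\<close> by (rule card_image_le)
  finally show ?thesis using card_supp_member[OF A] by simp
qed

lemma sdeg_taxon_le_card_interior:
  assumes "finite V" "x \<in> X"
  shows "sdeg X V E \<T> x \<le> card (interior X V)"
proof -
  have fin: "finite (interior X V)" using assms(1) unfolding interior_def by simp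
  have "sdeg X V E \<T> x =
      card ((\<lambda>w. {x, w}) ` {w \<in> interior X V. \<forall>A\<in>supp V E \<T> w. x \<in> A})"
    unfolding sdeg_def support_edges_taxon[OF assms(2)] ..
  also have "\<dots> \<le> card {w \<in> interior X V. \<forall>A\<in>supp V E \<T> w. x \<in> A}"
    using fin by (intro card_image_le) simp
  also have "\<dots> \<le> card (interior X V)"
    using fin by (intro card_mono) auto
  finally show ?thesis .
qed

lemma supp_mono: "\<T>' \<subseteq> \<T> \<Longrightarrow> supp V E \<T>' v \<subseteq> supp V E \<T> v"
  unfolding supp_def by blast

lemma support_edges_antimono:
  assumes "\<T>' \<subseteq> \<T>"
  shows "support_edges X V E \<T> \<subseteq> support_edges X V E \<T>'"
proof -
  have "\<forall>v. supp V E \<T>' v \<subseteq> supp V E \<T> v" using supp_mono[OF assms] by blast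
  then show ?thesis unfolding support_edges_def by blast
qed

text \<open>Some interior vertex loses all its support when ab is removed, so every triple
supporting it contains both a and b.\<close>
lemma minimal_triplet_cover_support_path:
  assumes "minimal_triplet_cover X V E \<T>" "{a, b} \<in> \<T>"
  obtains v where "v \<in> interior X V"
    "{a, v} \<in> support_edges X V E \<T>" "{v, b} \<in> support_edges X V E \<T>"
proof -
  have cover: "triplet_cover X V E \<T>" and "\<not> triplet_cover X V E (\<T> - {{a, b}})"
    using assms unfolding minimal_triplet_cover_def by blast+
  moreover have "\<T> - {{a, b}} \<subseteq> pairs X" using cover unfolding triplet_cover_def by blast
  ultimately obtain v where v: "v \<in> interior X V" and empty: "supp V E (\<T> - {{a, b}}) v = {}"
    unfolding triplet_cover_def by blast
  have ab: "a \<in> A \<and> b \<in> A" if A_supp: "A \<in> supp V E \<T> v" for A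
  proof (rule ccontr)
    assume "\<not> (a \<in> A \<and> b \<in> A)"
    obtain p q r where A: "A = {p, q, r}" "separated V E v p q" "separated V E v p r"
      "separated V E v q r" "{p, q} \<in> \<T>" "{p, r} \<in> \<T>" "{q, r} \<in> \<T>"
      using A_supp by (rule supp_memberE)
    then have "{p, q} \<noteq> {a, b}" "{p, r} \<noteq> {a, b}" "{q, r} \<noteq> {a, b}"
      using \<open>\<not> (a \<in> A \<and> b \<in> A)\<close> by auto
    then have "A \<in> supp V E (\<T> - {{a, b}}) v" using A unfolding supp_def by blast
    then show False using empty by simp
  qed
  have "a \<in> X" "b \<in> X"
    using assms(2) cover pairs_subset unfolding triplet_cover_def by blast+
  then have "{a, v} \<in> support_edges X V E \<T>" "{b, v} \<in> support_edges X V E \<T>"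
    using v ab unfolding support_edges_def by blast+
  then show thesis using that v by (simp add: insert_commute)
qed

lemma leaf_nbr_support_edge:
  assumes "binary_phylo_tree X V E" "x \<in> X" "{y. {x, y} \<in> E} = {u}" "u \<in> interior X V"
  shows "{u, x} \<in> support_edges X V E \<T>"
proof -
  have "\<forall>A\<in>supp V E \<T> u. x \<in> A" using leaf_mem_supp_nbr[OF assms(1,3,4)] by blast
  then have "{x, u} \<in> support_edges X V E \<T>"
    using assms(2,4) unfolding support_edges_def by blast
  then show ?thesis by (simp add: insert_commute)
qed

lemma sdeg_leaf_pos:
  assumes "binary_phylo_tree X V E" "x \<in> X" "{y. {x, y} \<in> E} = {u}" "u \<in> interior X V"
  shows "1 \<le> sdeg X V E \<T> x"
proof -
  have "finite V" using assms(1) unfolding binary_phylo_tree_def is_tree_def by blast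
  then have "finite (interior X V)" unfolding interior_def by simp
  then have "finite {e \<in> support_edges X V E \<T>. x \<in> e}"
    unfolding support_edges_taxon[OF assms(2)] by simp
  moreover have "{u, x} \<in> {e \<in> support_edges X V E \<T>. x \<in> e}"
    using leaf_nbr_support_edge[OF assms] by simp
  ultimately have "card {e \<in> support_edges X V E \<T>. x \<in> e} \<noteq> 0" by auto
  then show ?thesis unfolding sdeg_def by simp
qed

lemma sdeg_leaf_eq_1_iff:
  assumes "binary_phylo_tree X V E" "x \<in> X" "{y. {x, y} \<in> E} = {u}" "u \<in> interior X V"
  shows "sdeg X V E \<T> x = 1 \<longleftrightarrow> {e \<in> support_edges X V E \<T>. x \<in> e} = {{u, x}}"
proof
  assume "sdeg X V E \<T> x = 1"
  then obtain e where "{e \<in> support_edges X V E \<T>. x \<in> e} = {e}"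
    unfolding sdeg_def using card_1_singletonE by blast
  moreover have "{u, x} \<in> {e \<in> support_edges X V E \<T>. x \<in> e}"
    using leaf_nbr_support_edge[OF assms] by simp
  ultimately show "{e \<in> support_edges X V E \<T>. x \<in> e} = {{u, x}}" by simp
qed (simp add: sdeg_def)

lemma sdeg_leaf_eq_1_antimono:
  assumes "binary_phylo_tree X V E" "x \<in> X" "{y. {x, y} \<in> E} = {u}" "u \<in> interior X V"
    and "\<T>' \<subseteq> \<T>" "sdeg X V E \<T>' x = 1"
  shows "sdeg X V E \<T> x = 1"
proof -
  have "{e \<in> support_edges X V E \<T>. x \<in> e} \<subseteq> {e \<in> support_edges X V E \<T>'. x \<in> e}"
    using support_edges_antimono[OF assms(5)] by blast
  also have "\<dots> = {{u, x}}"
    using sdeg_leaf_eq_1_iff[OF assms(1-4), where \<T> = \<T>'] assms(6) by simp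
  finally have "{e \<in> support_edges X V E \<T>. x \<in> e} \<subseteq> {{u, x}}" .
  moreover have "{u, x} \<in> {e \<in> support_edges X V E \<T>. x \<in> e}"
    using leaf_nbr_support_edge[OF assms(1-4)] by simp
  ultimately have "{e \<in> support_edges X V E \<T>. x \<in> e} = {{u, x}}"
    by (intro subset_antisym) blast+
  then show ?thesis using sdeg_leaf_eq_1_iff[OF assms(1-4), where \<T> = \<T>] by simp
qed

lemma sdeg_leaf_eq_1_iff_supp:
  assumes "binary_phylo_tree X V E" "x \<in> X" "{y. {x, y} \<in> E} = {u}" "u \<in> interior X V"
  shows "sdeg X V E \<T> x = 1 \<longleftrightarrow> (\<forall>w\<in>interior X V - {u}. \<exists>A\<in>supp V E \<T> w. x \<notin> A)"
proof -
  define S where "S = {w \<in> interior X V. \<forall>A\<in>supp V E \<T> w. x \<in> A}"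
  have "u \<in> S" using leaf_mem_supp_nbr[OF assms(1,3,4)] assms(4) unfolding S_def by blast
  have "x \<noteq> u" using assms(2,4) unfolding interior_def by blast
  have "{e \<in> support_edges X V E \<T>. x \<in> e} = (\<lambda>w. {x, w}) ` S"
    unfolding S_def by (rule support_edges_taxon[OF assms(2)])
  then have "sdeg X V E \<T> x = 1 \<longleftrightarrow> (\<lambda>w. {x, w}) ` S = {{u, x}}"
    using sdeg_leaf_eq_1_iff[OF assms] by simp
  also have "\<dots> \<longleftrightarrow> S \<subseteq> {u}"
  proof
    assume image: "(\<lambda>w. {x, w}) ` S = {{u, x}}"
    show "S \<subseteq> {u}"
    proof
      fix w assume "w \<in> S"
      then have "{x, w} \<in> (\<lambda>w. {x, w}) ` S" by (rule imageI)
      then have "{x, w} = {u, x}" unfolding image by simp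
      then show "w \<in> {u}" using \<open>x \<noteq> u\<close> by (auto simp: doubleton_eq_iff)
    qed
  next
    assume "S \<subseteq> {u}"
    then have "S = {u}" using \<open>u \<in> S\<close> by blast
    then show "(\<lambda>w. {x, w}) ` S = {{u, x}}" by (simp add: insert_commute)
  qed
  also have "\<dots> \<longleftrightarrow> (\<forall>w\<in>interior X V - {u}. \<exists>A\<in>supp V E \<T> w. x \<notin> A)"
    unfolding S_def by auto
  finally show ?thesis .
qed

lemma card_remove_taxon_leaf:
  assumes "finite X" "binary_phylo_tree X V E" "triplet_cover X V E \<T>"
    and "{y. {x, y} \<in> E} = {u}" "u \<in> interior X V"
  shows "card (remove_taxon \<T> x) + 2 \<le> card \<T>"
proof -
  obtain A where A: "A \<in> supp V E \<T> u"
    using assms(3,5) unfolding triplet_cover_def by blast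
  have "x \<in> A" using leaf_mem_supp_nbr[OF assms(2,4,5) A] .
  then have "card (A - {x}) = 2" using card_supp_member[OF A] by simp
  then obtain p q where pq: "A - {x} = {p, q}" "p \<noteq> q" by (meson card_2_iff)
  have "{{x, p}, {x, q}} \<subseteq> \<T> - remove_taxon \<T> x"
    using supp_member_pair[OF A] \<open>x \<in> A\<close> pq unfolding remove_taxon_def by auto
  moreover have "card {{x, p}, {x, q}} = 2" using pq by (auto simp: doubleton_eq_iff)
  moreover have "finite \<T>"
    using assms(1,3) finite_pairs_subset unfolding triplet_cover_def by blast
  ultimately have "2 \<le> card (\<T> - remove_taxon \<T> x)" by (metis card_mono finite_Diff)
  moreover have sub: "remove_taxon \<T> x \<subseteq> \<T>" unfolding remove_taxon_def by blast
  ultimately show ?thesis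
    using card_Diff_subset[OF finite_subset[OF sub \<open>finite \<T>\<close>] sub]
      card_mono[OF \<open>finite \<T>\<close> sub] by linarith
qed

section \<open>Deleting a leaf\<close>

lemma interior_del_leaf:
  assumes "x \<in> X" "leaf_nbr E x = u"
  shows "interior (X - {x}) (del_leaf_V V E x) = interior X V - {u}"
  using assms unfolding interior_def del_leaf_V_def by auto

lemma remove_taxon_subset_pairs:
  assumes "\<T> \<subseteq> pairs X"
  shows "remove_taxon \<T> x \<subseteq> pairs (X - {x})"
  using assms unfolding remove_taxon_def pairs_def by blast

text \<open>An edge ab of T - x that is not an edge of T replaces the path a, u, b through the
suppressed vertex u.\<close>
lemma rtrancl_del_leaf_lift:
  assumes "leaf_nbr E x = u" "w \<noteq> u"
    and "(a, b) \<in> (adj {e \<in> del_leaf_E E x. w \<notin> e})\<^sup>*"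
  shows "(a, b) \<in> (adj {e \<in> E. w \<notin> e})\<^sup>*"
  using assms(3)
proof (induction rule: rtrancl_induct)
  case (step y z)
  define R where "R = adj {e \<in> E. w \<notin> e}"
  have yz: "{y, z} \<in> del_leaf_E E x" "w \<notin> {y, z}" using step.hyps(2) by auto
  show ?case
  proof (cases "{y, z} \<in> E \<and> u \<notin> {y, z}")
    case True
    then have "(y, z) \<in> R" using yz(2) unfolding R_def by simp
    then show ?thesis using step.IH unfolding R_def by (rule rtrancl_into_rtrancl[rotated])
  next
    case False
    then obtain c d where "{y, z} = {c, d}" "{c, u} \<in> E" "{d, u} \<in> E"
      using yz(1) assms(1) unfolding del_leaf_E_def by auto
    then have "{y, u} \<in> E" "{u, z} \<in> E" by (auto simp: doubleton_eq_iff insert_commute)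
    then have "(y, u) \<in> R" "(u, z) \<in> R" using yz(2) assms(2) unfolding R_def by auto
    then show ?thesis using step.IH unfolding R_def by (blast intro: rtrancl_into_rtrancl)
  qed
qed simp

text \<open>Conversely, a path of T avoiding w that starts outside the leaf edge xu is mirrored in
T - x; while the path sits at x or u, the mirror waits at the last neighbour y of u visited.\<close>
lemma rtrancl_del_leaf_project:
  assumes pendant: "{y. {x, y} \<in> E} = {u}" and "a \<notin> {x, u}"
    and "(a, b) \<in> (adj {e \<in> E. w \<notin> e})\<^sup>*"
  shows "(b \<notin> {x, u} \<longrightarrow> (a, b) \<in> (adj {e \<in> del_leaf_E E x. w \<notin> e})\<^sup>*) \<and>
    (b \<in> {x, u} \<longrightarrow> (\<exists>y. {y, u} \<in> E \<and> y \<noteq> x \<and> y \<noteq> w \<and>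
      (a, y) \<in> (adj {e \<in> del_leaf_E E x. w \<notin> e})\<^sup>*))"
  using assms(3)
proof (induction rule: rtrancl_induct)
  case base
  then show ?case using assms(2) by simp
next
  case (step z z')
  define R' where "R' = adj {e \<in> del_leaf_E E x. w \<notin> e}"
  have nbr: "leaf_nbr E x = u" by (rule leaf_nbr_eq[OF pendant])
  have e: "{z, z'} \<in> E" "w \<notin> {z, z'}" using step.hyps(2) by auto
  have del_edge: "(c, d) \<in> R'" if "{c, u} \<in> E" "{d, u} \<in> E" "c \<noteq> x" "d \<noteq> x" "c \<noteq> d"
    "w \<notin> {c, d}" for c d
  proof -
    have "{c, d} \<in> del_leaf_E E x" unfolding del_leaf_E_def nbr using that(1-5) by blast
    then show ?thesis using that(6) unfolding R'_def by simp
  qed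
  show ?case
  proof (cases "z \<in> {x, u}")
    case True
    then obtain y where y: "{y, u} \<in> E" "y \<noteq> x" "y \<noteq> w" "(a, y) \<in> R'\<^sup>*"
      using step.IH unfolding R'_def by blast
    show ?thesis
    proof (cases "z' \<in> {x, u}")
      case False
      have "z = u"
      proof (rule ccontr)
        assume "z \<noteq> u"
        then have "{x, z'} \<in> E" using True e(1) by simp
        then show False using pendant_nbr_unique[OF pendant] \<open>z' \<notin> {x, u}\<close> by blast
      qed
      then have "{z', u} \<in> E" using e(1) by (simp add: insert_commute)
      have "(a, z') \<in> R'\<^sup>*"
      proof (cases "y = z'")
        case False
        then have "(y, z') \<in> R'"
          using del_edge[OF y(1) \<open>{z', u} \<in> E\<close> y(2)] \<open>z' \<notin> {x, u}\<close> y(3) e(2) by simp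
        with y(4) show ?thesis by (rule rtrancl_into_rtrancl)
      qed (use y(4) in simp)
      then show ?thesis using False unfolding R'_def by blast
    qed (use y in \<open>unfold R'_def, blast\<close>)
  next
    case False
    then have az: "(a, z) \<in> R'\<^sup>*" using step.IH unfolding R'_def by blast
    have "z' \<noteq> x"
    proof
      assume "z' = x"
      then have "{x, z} \<in> E" using e(1) by (simp add: insert_commute)
      then have "z = u" by (rule pendant_nbr_unique[OF pendant])
      then show False using False by simp
    qed
    show ?thesis
    proof (cases "z' = u")
      case True
      then have "{z, u} \<in> E" using e(1) by simp
      then show ?thesis using az e(2) False True unfolding R'_def by blast
    next
      case False
      then have "{z, z'} \<in> del_leaf_E E x"
        using e(1) \<open>z \<notin> {x, u}\<close> unfolding del_leaf_E_def nbr by blast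
      then have "(z, z') \<in> R'" using e(2) unfolding R'_def by simp
      with az have "(a, z') \<in> R'\<^sup>*" by (rule rtrancl_into_rtrancl)
      then show ?thesis using \<open>z' \<noteq> x\<close> False unfolding R'_def by blast
    qed
  qed
qed

lemma separated_del_leaf_iff:
  assumes pendant: "{y. {x, y} \<in> E} = {u}" and "w \<noteq> u" "p \<notin> {x, u}" "q \<notin> {x, u}"
  shows "separated (del_leaf_V V E x) (del_leaf_E E x) w p q \<longleftrightarrow> separated V E w p q"
proof -
  have nbr: "leaf_nbr E x = u" by (rule leaf_nbr_eq[OF pendant])
  have "(p, q) \<in> (adj {e \<in> del_leaf_E E x. w \<notin> e})\<^sup>* \<longleftrightarrow> (p, q) \<in> (adj {e \<in> E. w \<notin> e})\<^sup>*"
  proof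
    assume "(p, q) \<in> (adj {e \<in> E. w \<notin> e})\<^sup>*"
    then show "(p, q) \<in> (adj {e \<in> del_leaf_E E x. w \<notin> e})\<^sup>*"
      using rtrancl_del_leaf_project[OF pendant assms(3)] assms(4) by blast
  qed (rule rtrancl_del_leaf_lift[OF nbr assms(2)])
  then show ?thesis using assms(3,4) unfolding separated_def del_leaf_V_def nbr by auto
qed

lemma supp_del_leaf:
  assumes "\<T> \<subseteq> pairs X" "{y. {x, y} \<in> E} = {u}" "u \<notin> X" "w \<noteq> u"
  shows "supp (del_leaf_V V E x) (del_leaf_E E x) (remove_taxon \<T> x) w =
    {A \<in> supp V E \<T> w. x \<notin> A}"
proof -
  have sep: "separated (del_leaf_V V E x) (del_leaf_E E x) w p q \<longleftrightarrow> separated V E w p q"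
    if "p \<in> X - {x}" "q \<in> X - {x}" for p q
    using separated_del_leaf_iff[OF assms(2,4)] that assms(3) by auto
  have pair: "{p, q} \<in> remove_taxon \<T> x \<longleftrightarrow> {p, q} \<in> \<T> \<and> p \<in> X - {x} \<and> q \<in> X - {x}" for p q
    using assms(1) pairs_subset unfolding remove_taxon_def by blast
  show ?thesis
  proof (intro equalityI subsetI)
    fix A assume "A \<in> supp (del_leaf_V V E x) (del_leaf_E E x) (remove_taxon \<T> x) w"
    then obtain a b c where "A = {a, b, c}"
      "separated (del_leaf_V V E x) (del_leaf_E E x) w a b"
      "separated (del_leaf_V V E x) (del_leaf_E E x) w a c"
      "separated (del_leaf_V V E x) (del_leaf_E E x) w b c"
      "{a, b} \<in> remove_taxon \<T> x" "{a, c} \<in> remove_taxon \<T> x" "{b, c} \<in> remove_taxon \<T> x"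
      by (rule supp_memberE)
    then show "A \<in> {A \<in> supp V E \<T> w. x \<notin> A}"
      unfolding supp_def pair using sep by blast
  next
    fix A assume "A \<in> {A \<in> supp V E \<T> w. x \<notin> A}"
    then obtain a b c where A: "A = {a, b, c}" and "x \<notin> A"
      and sep_abc: "separated V E w a b" "separated V E w a c" "separated V E w b c"
      and pairs_abc: "{a, b} \<in> \<T>" "{a, c} \<in> \<T>" "{b, c} \<in> \<T>"
      unfolding supp_def by blast
    have X: "a \<in> X - {x}" "b \<in> X - {x}" "c \<in> X - {x}"
      using pairs_abc assms(1) pairs_subset \<open>x \<notin> A\<close> unfolding A by blast+
    have "separated (del_leaf_V V E x) (del_leaf_E E x) w a b"
      "separated (del_leaf_V V E x) (del_leaf_E E x) w a c"
      "separated (del_leaf_V V E x) (del_leaf_E E x) w b c"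
      using sep_abc sep X by blast+
    moreover have "{a, b} \<in> remove_taxon \<T> x" "{a, c} \<in> remove_taxon \<T> x"
      "{b, c} \<in> remove_taxon \<T> x"
      using pairs_abc X pair by blast+
    ultimately show "A \<in> supp (del_leaf_V V E x) (del_leaf_E E x) (remove_taxon \<T> x) w"
      unfolding A supp_def by blast
  qed
qed

lemma triplet_cover_del_leaf_iff:
  assumes "\<T> \<subseteq> pairs X" "x \<in> X" "{y. {x, y} \<in> E} = {u}" "u \<notin> X"
  shows "triplet_cover (X - {x}) (del_leaf_V V E x) (del_leaf_E E x) (remove_taxon \<T> x) \<longleftrightarrow>
    (\<forall>w\<in>interior X V - {u}. \<exists>A\<in>supp V E \<T> w. x \<notin> A)"
  using remove_taxon_subset_pairs[OF assms(1)] supp_del_leaf[OF assms(1,3,4)]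
  unfolding triplet_cover_def interior_del_leaf[OF assms(2) leaf_nbr_eq[OF assms(3)]] by auto

theorem proposition1:
  fixes X V :: "'v set" and E :: "'v set set" and \<T> \<T>' :: "'v set set" and x :: 'v
  assumes "finite X" and "card X \<ge> 3"
    and "binary_phylo_tree X V E"
    and "triplet_cover X V E \<T>" and "triplet_cover X V E \<T>'"
    and "x \<in> X"
  shows
    "((\<forall>v\<in>interior X V. 0 \<le> sdeg X V E \<T> v \<and> sdeg X V E \<T> v \<le> 3)
     \<and> 1 \<le> sdeg X V E \<T> x \<and> sdeg X V E \<T> x \<le> card X - 2)
   \<and>
    (\<T>' \<subseteq> \<T> \<longrightarrow> support_edges X V E \<T> \<subseteq> support_edges X V E \<T>'
       \<and> (sdeg X V E \<T>' x = 1 \<longrightarrow> sdeg X V E \<T> x = 1))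
   \<and>
    (minimal_triplet_cover X V E \<T> \<longrightarrow>
       (\<forall>a b. {a, b} \<in> \<T> \<longrightarrow> (\<exists>v\<in>interior X V.
          {a, v} \<in> support_edges X V E \<T> \<and> {v, b} \<in> support_edges X V E \<T>)))
   \<and>
    (\<forall>v. {v, x} \<in> E \<longrightarrow>
       {v, x} \<in> support_edges X V E \<T> \<and>
       (sdeg X V E \<T> x = 1 \<longleftrightarrow> {e \<in> support_edges X V E \<T>. x \<in> e} = {{v, x}}))
   \<and>
    (card X \<ge> 4 \<longrightarrow>
       (sdeg X V E \<T> x = 1 \<longleftrightarrow>
        triplet_cover (X - {x}) (del_leaf_V V E x) (del_leaf_E E x) (remove_taxon \<T> x)))
   \<and>
    (sdeg X V E \<T> x = 1 \<longrightarrow> card \<T> \<ge> card (remove_taxon \<T> x) + 2)"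
proof -
  obtain u where pendant: "{y. {x, y} \<in> E} = {u}" and u: "u \<in> interior X V"
    using binary_phylo_tree_leaf_nbr[OF assms(3,2,6)] by blast
  note leaf = assms(3,6) pendant u
  have "finite V" using assms(3) unfolding binary_phylo_tree_def is_tree_def by blast
  have "u \<notin> X" using u unfolding interior_def by blast
  have "\<T> \<subseteq> pairs X" using assms(4) unfolding triplet_cover_def by blast
  show ?thesis
  proof (intro conjI impI allI ballI)
    fix v assume "v \<in> interior X V"
    show "0 \<le> sdeg X V E \<T> v" by simp
    show "sdeg X V E \<T> v \<le> 3" using \<open>v \<in> interior X V\<close> by (rule sdeg_interior_le_3[OF assms(4)])
  next
    show "1 \<le> sdeg X V E \<T> x" by (rule sdeg_leaf_pos[OF leaf])
  next
    show "sdeg X V E \<T> x \<le> card X - 2"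
      using sdeg_taxon_le_card_interior[OF \<open>finite V\<close> assms(6), where E = E and \<T> = \<T>]
        binary_phylo_tree_card_interior[OF assms(3)] by linarith
  next
    assume "\<T>' \<subseteq> \<T>"
    then show "support_edges X V E \<T> \<subseteq> support_edges X V E \<T>'"
      by (rule support_edges_antimono)
  next
    assume "\<T>' \<subseteq> \<T>" "sdeg X V E \<T>' x = 1"
    then show "sdeg X V E \<T> x = 1" by (rule sdeg_leaf_eq_1_antimono[OF leaf])
  next
    fix a b assume "minimal_triplet_cover X V E \<T>" "{a, b} \<in> \<T>"
    then obtain v where "v \<in> interior X V"
      "{a, v} \<in> support_edges X V E \<T>" "{v, b} \<in> support_edges X V E \<T>"
      by (rule minimal_triplet_cover_support_path)
    then show "\<exists>v\<in>interior X V.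
        {a, v} \<in> support_edges X V E \<T> \<and> {v, b} \<in> support_edges X V E \<T>" by blast
  next
    fix v assume "{v, x} \<in> E"
    then have "v = u" using pendant_nbr_unique[OF pendant] by (simp add: insert_commute)
    then show "{v, x} \<in> support_edges X V E \<T>"
      "sdeg X V E \<T> x = 1 \<longleftrightarrow> {e \<in> support_edges X V E \<T>. x \<in> e} = {{v, x}}"
      using leaf_nbr_support_edge[OF leaf] sdeg_leaf_eq_1_iff[OF leaf] by simp_all
  next
    show "sdeg X V E \<T> x = 1 \<longleftrightarrow>
        triplet_cover (X - {x}) (del_leaf_V V E x) (del_leaf_E E x) (remove_taxon \<T> x)"
      using sdeg_leaf_eq_1_iff_supp[OF leaf]
        triplet_cover_del_leaf_iff[OF \<open>\<T> \<subseteq> pairs X\<close> assms(6) pendant \<open>u \<notin> X\<close>] by simp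
  next
    show "card \<T> \<ge> card (remove_taxon \<T> x) + 2"
      by (rule card_remove_taxon_leaf[OF assms(1,3,4) pendant u])
  qed
qed

end
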